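(* For $i=1,2$ let $\mathcal{C}_i$ be an $[n,k_i,d_i]_q$ linear code and $\mathcal{C}=\{(\mathbf{u},\mathbf{u}+\mathbf{v}):\mathbf{u}\in\mathcal{C}_1,\mathbf{v}\in\mathcal{C}_2\}$. Fix the Euclidean inner product (resp. the Hermitian inner product, when $q$ is an even power of a prime), with dual denoted $\perp$. Suppose that either (i) $q=2^m$ for some $m$ and $\mathcal{C}_2$ is self-orthogonal, or (ii) both $\mathcal{C}_1$ and $\mathcal{C}_2$ are self-orthogonal. Then: 1) $\mathcal{C}$ is self-orthogonal if and only if $\mathcal{C}_1\subseteq\mathcal{C}_2^{\perp}$, if and only if $\mathcal{C}_2\subseteq\mathcal{C}_1^{\perp}$; 2) $\mathcal{C}$ is LCD if and only if $2\dim(\mathcal{C}_1\cap\mathcal{C}_2^{\perp})=k_1-k_2$; 3) $\mathcal{C}$ is self-dual if and only if $\mathcal{C}_1=\mathcal{C}_2^{\perp}$, if and only if $\mathcal{C}_2=\mathcal{C}_1^{\perp}$.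
   Context: Euclidean inner product $\sum_ix_iy_i$; for $q=p^h$, $h$ even, Hermitian inner product $\sum_ix_iy_i^{\sqrt q}$. With $\perp$ the dual under the chosen inner product, $\mathcal{C}$ is self-orthogonal if $\mathcal{C}\subseteq\mathcal{C}^{\perp}$, self-dual if $\mathcal{C}=\mathcal{C}^{\perp}$, LCD if $\mathcal{C}\cap\mathcal{C}^{\perp}=\{0\}$. *)

theory Defs
  imports Complex_Main "HOL-Computational_Algebra.Primes" "HOL-Library.Function_Algebras"
begin

text \<open>Vectors of length n over a finite field 'a are functions nat => 'a vanishing from index n on.\<close>

definition fscale :: "'a::field \<Rightarrow> (nat \<Rightarrow> 'a) \<Rightarrow> (nat \<Rightarrow> 'a)" where
  "fscale c v = (\<lambda>i. c * v i)"

definition vecs :: "nat \<Rightarrow> (nat \<Rightarrow> 'a::zero) set" where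
  "vecs n = {v. \<forall>i\<ge>n. v i = 0}"

definition linear_code :: "nat \<Rightarrow> (nat \<Rightarrow> 'a::{finite,field}) set \<Rightarrow> bool" where
  "linear_code n C \<longleftrightarrow> C \<subseteq> vecs n \<and> module.subspace fscale C"

definition code_dim :: "(nat \<Rightarrow> 'a::{finite,field}) set \<Rightarrow> nat" where
  "code_dim C = vector_space.dim fscale C"

datatype inner_kind = Euclidean | Hermitian

definition admissible_kind :: "inner_kind \<Rightarrow> 'a::{finite,field} itself \<Rightarrow> bool" where
  "admissible_kind k TYPE('a) \<longleftrightarrow>
     k = Euclidean \<or> (\<exists>p h. prime (p::nat) \<and> even h \<and> card (UNIV :: 'a set) = p ^ h)"

definition sqrt_q :: "'a::finite itself \<Rightarrow> nat" where
  "sqrt_q TYPE('a) = (THE r::nat. r ^ 2 = card (UNIV :: 'a set))"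

definition ip :: "inner_kind \<Rightarrow> nat \<Rightarrow> (nat \<Rightarrow> 'a::{finite,field}) \<Rightarrow> (nat \<Rightarrow> 'a) \<Rightarrow> 'a" where
  "ip k n x y = (\<Sum>i<n. x i * (case k of Euclidean \<Rightarrow> y i
                                    | Hermitian \<Rightarrow> y i ^ sqrt_q TYPE('a)))"

definition dual :: "inner_kind \<Rightarrow> nat \<Rightarrow> (nat \<Rightarrow> 'a::{finite,field}) set \<Rightarrow> (nat \<Rightarrow> 'a) set" where
  "dual k n C = {x \<in> vecs n. \<forall>y\<in>C. ip k n x y = 0}"

definition self_orthogonal :: "inner_kind \<Rightarrow> nat \<Rightarrow> (nat \<Rightarrow> 'a::{finite,field}) set \<Rightarrow> bool" where
  "self_orthogonal k n C \<longleftrightarrow> C \<subseteq> dual k n C"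

definition self_dual :: "inner_kind \<Rightarrow> nat \<Rightarrow> (nat \<Rightarrow> 'a::{finite,field}) set \<Rightarrow> bool" where
  "self_dual k n C \<longleftrightarrow> C = dual k n C"

definition LCD :: "inner_kind \<Rightarrow> nat \<Rightarrow> (nat \<Rightarrow> 'a::{finite,field}) set \<Rightarrow> bool" where
  "LCD k n C \<longleftrightarrow> C \<inter> dual k n C = {0}"

definition uuv :: "nat \<Rightarrow> (nat \<Rightarrow> 'a::{finite,field}) set \<Rightarrow> (nat \<Rightarrow> 'a) set \<Rightarrow> (nat \<Rightarrow> 'a) set" where
  "uuv n C1 C2 = {(\<lambda>i. if i < n then u i else if i < 2 * n then u (i - n) + v (i - n) else 0)
                   | u v. u \<in> C1 \<and> v \<in> C2}"

end

theory Submission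
  imports Defs "HOL-Library.FuncSet" "HOL-Library.Product_Plus"
begin

(*
  Both inner products are <x, y> = (SUM i<n. x i * \<sigma> (y i)) for a field involution \<sigma>
  (the identity, or a \<mapsto> a ^ sqrt q), and over F_q every subspace S of F_q^n has
  |S| = q ^ dim S, so dimension identities can be proved by counting.  Two counts do the work:
  |S + T| |S \<inter> T| = |S| |T| (fibres of (x, y) \<mapsto> x + y) and |C\<^sup>\<bottom>| |C| = q ^ n (for a basis B
  of C, x \<mapsto> (<x, b>) for b \<in> B maps F_q^n onto F_q^B with kernel C\<^sup>\<bottom>).  Applied to S = C1 and
  T = C2\<^sup>\<bottom> they give dim (C1 \<inter> C2\<^sup>\<bottom>) - dim (C2 \<inter> C1\<^sup>\<bottom>) = k1 - k2.

  For c = (u | u + v) and c' = (u' | u' + v') one has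
  <c, c'> = 2 <u, u'> + <u, v'> + <v, u'> + <v, v'>, and the hypotheses kill the first and last
  terms.  Hence c \<in> C\<^sup>\<bottom> iff u \<in> C2\<^sup>\<bottom> and v \<in> C1\<^sup>\<bottom>, so C \<inter> C\<^sup>\<bottom> is the (u | u + v) code built from
  C1 \<inter> C2\<^sup>\<bottom> and C2 \<inter> C1\<^sup>\<bottom>.  This gives 1) and 2); 3) follows from 1) because |C| = |C1| |C2|.
*)

section \<open>Counting in finite abelian groups and vector spaces\<close>

lemma card_eq_card_kernel_mult_card_image:
  fixes f :: "'a::ab_group_add \<Rightarrow> 'b::ab_group_add"
  assumes "additive f" and "finite A"
    and diff_closed: "\<And>x y. x \<in> A \<Longrightarrow> y \<in> A \<Longrightarrow> x - y \<in> A"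
  shows "card A = card {x \<in> A. f x = 0} * card (f ` A)"
proof -
  interpret additive f by fact
  let ?K = "{x \<in> A. f x = 0}"
  have add_closed: "x + y \<in> A" if "x \<in> A" "y \<in> A" for x y
  proof -
    have "0 - y \<in> A" using diff_closed that by (metis diff_self)
    then show ?thesis using diff_closed[OF \<open>x \<in> A\<close>] by fastforce
  qed
  have fibre: "card {x \<in> A. f x = z} = card ?K" if z: "z \<in> f ` A" for z
  proof -
    obtain x0 where x0: "x0 \<in> A" "z = f x0" using z by blast
    have "{x \<in> A. f x = z} = (+) x0 ` ?K"
    proof (intro equalityI subsetI)
      fix x assume "x \<in> {x \<in> A. f x = z}"
      then have "x - x0 \<in> ?K" using x0 diff_closed by (simp add: diff)
      then show "x \<in> (+) x0 ` ?K" by (force intro: image_eqI[of x _ "x - x0"])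
    qed (use x0 add_closed in \<open>auto simp: add\<close>)
    then show ?thesis by (simp add: card_image)
  qed
  have "(\<Sum>x\<in>A. card {z \<in> f ` A. f x = z}) = card ?K * card (f ` A)"
    by (rule sum_multicount) (use fibre assms(2) in auto)
  moreover have "{z \<in> f ` A. f x = z} = {f x}" if "x \<in> A" for x
    using that by auto
  ultimately show ?thesis by simp
qed

lemma card_sums_mult_card_Int:
  fixes S T :: "'a::ab_group_add set"
  assumes "finite S" "finite T"
    and S: "\<And>x y. x \<in> S \<Longrightarrow> y \<in> S \<Longrightarrow> x - y \<in> S"
    and T: "\<And>x y. x \<in> T \<Longrightarrow> y \<in> T \<Longrightarrow> x - y \<in> T"
  shows "card {x + y |x y. x \<in> S \<and> y \<in> T} * card (S \<inter> T) = card S * card T"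
proof -
  let ?f = "\<lambda>p :: 'a \<times> 'a. fst p + snd p"
  have neg_T: "- y \<in> T" if "y \<in> T" for y
    using T[OF T[OF that that] that] by simp
  have "additive ?f" by unfold_locales (simp add: algebra_simps)
  then have "card (S \<times> T) = card {p \<in> S \<times> T. ?f p = 0} * card (?f ` (S \<times> T))"
    by (rule card_eq_card_kernel_mult_card_image) (use assms in \<open>auto simp: finite_cartesian_product\<close>)
  moreover have "{p \<in> S \<times> T. ?f p = 0} = (\<lambda>w. (w, - w)) ` (S \<inter> T)"
  proof (intro equalityI subsetI)
    fix p assume "p \<in> {p \<in> S \<times> T. ?f p = 0}"
    then have "p = (fst p, - fst p)" "fst p \<in> S \<inter> T"
      using neg_T[of "snd p"] by (auto simp: add_eq_0_iff2 prod_eq_iff)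
    then show "p \<in> (\<lambda>w. (w, - w)) ` (S \<inter> T)" by blast
  qed (auto intro: neg_T)
  moreover have "card ((\<lambda>w. (w, - w)) ` (S \<inter> T)) = card (S \<inter> T)"
    by (rule card_image) (auto intro: inj_onI)
  moreover have "?f ` (S \<times> T) = {x + y |x y. x \<in> S \<and> y \<in> T}"
    by force
  ultimately show ?thesis by (simp add: card_cartesian_product)
qed

lemma card_funs_vanishing_outside:
  assumes "finite B"
  shows "card {g :: 'b \<Rightarrow> 'a::zero. \<forall>x. x \<notin> B \<longrightarrow> g x = 0} = card (UNIV :: 'a set) ^ card B"
proof -
  have "bij_betw (\<lambda>g. restrict g B) {g. \<forall>x. x \<notin> B \<longrightarrow> g x = 0} (B \<rightarrow>\<^sub>E (UNIV :: 'a set))"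
    by (rule bij_betw_byWitness[where f' = "\<lambda>h x. if x \<in> B then h x else 0"])
       (auto simp: fun_eq_iff PiE_iff extensional_def)
  then have "card {g :: 'b \<Rightarrow> 'a. \<forall>x. x \<notin> B \<longrightarrow> g x = 0} = card (B \<rightarrow>\<^sub>E (UNIV :: 'a set))"
    by (rule bij_betw_same_card)
  then show ?thesis using assms by (simp add: card_PiE)
qed

lemma sum_lessThan_double:
  fixes n :: nat
  shows "(\<Sum>i<2 * n. g i) = (\<Sum>i<n. g i) + (\<Sum>i<n. g (i + n))"
proof -
  have "(\<Sum>i<2 * n. g i) = (\<Sum>i\<in>{0..<n}. g i) + (\<Sum>i\<in>{n..<n + n}. g i)"
    by (simp add: sum.atLeastLessThan_concat lessThan_atLeast0 mult_2)
  also have "(\<Sum>i\<in>{n..<n + n}. g i) = (\<Sum>i\<in>{0..<n}. g (i + n))"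
    using sum.shift_bounds_nat_ivl[of g 0 n n] by simp
  finally show ?thesis by (simp add: lessThan_atLeast0)
qed

context vector_space
begin

lemma card_span_independent:
  assumes "independent B" "finite B"
  shows "card (span B) = card (UNIV :: 'a set) ^ card B"
proof -
  have "bij_betw (\<lambda>u. \<Sum>b\<in>B. u b *s b) (B \<rightarrow>\<^sub>E UNIV) (span B)"
  proof (rule bij_betwI')
    fix u v :: "'b \<Rightarrow> 'a" assume uv: "u \<in> B \<rightarrow>\<^sub>E UNIV" "v \<in> B \<rightarrow>\<^sub>E UNIV"
    show "(\<Sum>b\<in>B. u b *s b) = (\<Sum>b\<in>B. v b *s b) \<longleftrightarrow> u = v"
    proof
      assume "(\<Sum>b\<in>B. u b *s b) = (\<Sum>b\<in>B. v b *s b)"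
      then have "(\<Sum>b\<in>B. (u b - v b) *s b) = 0"
        by (simp add: scale_left_diff_distrib sum_subtractf)
      then have "u b = v b" if "b \<in> B" for b
        using independentD[OF assms(1) assms(2) subset_refl _ that, of "\<lambda>b. u b - v b"] by simp
      then show "u = v" using uv by (auto intro: PiE_ext)
    qed simp
  next
    fix u :: "'b \<Rightarrow> 'a"
    show "(\<Sum>b\<in>B. u b *s b) \<in> span B"
      by (intro span_sum span_scale span_base)
  next
    fix x assume "x \<in> span B"
    then obtain u where "x = (\<Sum>b\<in>B. u b *s b)"
      using span_finite[OF assms(2)] by auto
    then show "\<exists>u\<in>B \<rightarrow>\<^sub>E UNIV. x = (\<Sum>b\<in>B. u b *s b)"
      by (intro bexI[of _ "restrict u B"]) auto
  qed
  then show ?thesis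
    using assms(2) by (simp add: bij_betw_same_card[symmetric] card_PiE)
qed

lemma card_subspace:
  assumes "subspace S" "finite S"
  shows "card S = card (UNIV :: 'a set) ^ dim S"
proof -
  obtain B where B: "B \<subseteq> S" "independent B" "S \<subseteq> span B" "card B = dim S"
    by (rule basis_exists)
  then have "span B = S" using span_subspace assms(1) by blast
  then show ?thesis
    using card_span_independent[OF B(2)] B(1,4) assms(2) finite_subset by metis
qed

end

section \<open>Finite fields\<close>

lemma one_less_card_UNIV: "1 < card (UNIV :: 'a::{finite,field} set)"
proof -
  have "card {0, 1 :: 'a} \<le> card (UNIV :: 'a set)" by (rule card_mono) simp_all
  then show ?thesis by simp
qed

lemma of_nat_card_UNIV_eq_0: "of_nat (card (UNIV :: 'a::{finite,ring_1} set)) = (0 :: 'a)"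
proof -
  have "(\<Sum>x\<in>UNIV. x) = (\<Sum>x\<in>UNIV. x + (1 :: 'a))"
    by (rule sum.reindex_bij_witness[where i = "\<lambda>x. x + 1" and j = "\<lambda>x. x - 1"]) auto
  then show ?thesis by (simp add: sum.distrib)
qed

lemma CHAR_eq_if_card_UNIV_eq_prime_power:
  fixes p :: nat
  assumes "prime p" "card (UNIV :: 'a::{finite,field} set) = p ^ h"
  shows "CHAR('a) = p"
proof -
  have "prime CHAR('a)"
    by (rule prime_CHAR_semidom, rule finite_imp_CHAR_pos) simp
  moreover have "CHAR('a) dvd p ^ h"
    using of_nat_card_UNIV_eq_0[where 'a = 'a] unfolding assms(2) of_nat_eq_0_iff_char_dvd .
  ultimately show ?thesis
    using assms(1) prime_dvd_power primes_dvd_imp_eq by blast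
qed

(* The library's finite_field_power_card_eq_same is stated for the sort finite_field only. *)
lemma power_card_UNIV_eq_self: "(a :: 'a::{finite,field}) ^ card (UNIV :: 'a set) = a"
proof (cases "a = 0")
  case True
  then show ?thesis by (simp add: finite_UNIV_card_ge_0)
next
  case False
  let ?U = "UNIV - {0 :: 'a}"
  have "(\<Prod>x\<in>?U. x) = (\<Prod>x\<in>?U. a * x)"
    by (rule prod.reindex_bij_witness[where i = "\<lambda>x. a * x" and j = "\<lambda>x. x / a"])
       (use False in simp_all)
  also have "\<dots> = a ^ card ?U * (\<Prod>x\<in>?U. x)"
    by (simp add: prod.distrib)
  finally have "a ^ card ?U = 1"
    using mult_cancel_right1[of "\<Prod>x\<in>?U. x" "a ^ card ?U"] by simp
  moreover have "card (UNIV :: 'a set) = Suc (card ?U)"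
    using finite_UNIV_card_ge_0[where 'a = 'a] by (simp add: card_Diff_singleton)
  ultimately show ?thesis by (simp only: power_Suc mult_1_right)
qed

section \<open>Sesquilinear forms on \<open>F\<^sup>n\<close>\<close>

lemma card_vecs: "card (vecs n :: (nat \<Rightarrow> 'a::zero) set) = card (UNIV :: 'a set) ^ n"
proof -
  have "vecs n = {v :: nat \<Rightarrow> 'a. \<forall>i. i \<notin> {..<n} \<longrightarrow> v i = 0}"
    by (auto simp: vecs_def)
  then show ?thesis
    using card_funs_vanishing_outside[of "{..<n}", where 'a = 'a] by simp
qed

lemma finite_vecs: "finite (vecs n :: (nat \<Rightarrow> 'a::{finite,zero}) set)"
  using card_vecs[of n, where 'a = 'a] by (intro card_ge_0_finite) (simp add: finite_UNIV_card_ge_0)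

interpretation vs: vector_space "fscale :: 'a::field \<Rightarrow> (nat \<Rightarrow> 'a) \<Rightarrow> nat \<Rightarrow> 'a"
  by unfold_locales (auto simp: fscale_def fun_eq_iff algebra_simps)

lemma subspace_vecs: "vs.subspace (vecs n)"
  by (auto simp: vs.subspace_def vecs_def fscale_def)

lemma card_subspace_vecs:
  fixes S :: "(nat \<Rightarrow> 'a::{finite,field}) set"
  assumes "vs.subspace S" "S \<subseteq> vecs n"
  shows "card S = card (UNIV :: 'a set) ^ vs.dim S"
  using vs.card_subspace[OF assms(1)] finite_subset[OF assms(2) finite_vecs] by blast

definition sesq_form :: "('a::field \<Rightarrow> 'a) \<Rightarrow> nat \<Rightarrow> (nat \<Rightarrow> 'a) \<Rightarrow> (nat \<Rightarrow> 'a) \<Rightarrow> 'a" where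
  "sesq_form \<sigma> n x y = (\<Sum>i<n. x i * \<sigma> (y i))"

definition sesq_dual :: "('a::field \<Rightarrow> 'a) \<Rightarrow> nat \<Rightarrow> (nat \<Rightarrow> 'a) set \<Rightarrow> (nat \<Rightarrow> 'a) set" where
  "sesq_dual \<sigma> n C = {x \<in> vecs n. \<forall>y\<in>C. sesq_form \<sigma> n x y = 0}"

lemma sesq_dual_subset_vecs: "sesq_dual \<sigma> n C \<subseteq> vecs n"
  by (auto simp: sesq_dual_def)

lemma finite_sesq_dual: "finite (sesq_dual \<sigma> n (C :: (nat \<Rightarrow> 'a::{finite,field}) set))"
  using finite_subset[OF sesq_dual_subset_vecs finite_vecs] .

locale field_involution = additive \<sigma> for \<sigma> :: "'a::field \<Rightarrow> 'a" +
  assumes mult: "\<sigma> (a * b) = \<sigma> a * \<sigma> b"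
    and involutive: "\<sigma> (\<sigma> a) = a"
begin

lemma sesq_form_add_left: "sesq_form \<sigma> n (x + x') y = sesq_form \<sigma> n x y + sesq_form \<sigma> n x' y"
  by (simp add: sesq_form_def sum.distrib distrib_right)

lemma sesq_form_add_right: "sesq_form \<sigma> n x (y + y') = sesq_form \<sigma> n x y + sesq_form \<sigma> n x y'"
  by (simp add: sesq_form_def sum.distrib distrib_left add)

lemma sesq_form_scale_left: "sesq_form \<sigma> n (fscale c x) y = c * sesq_form \<sigma> n x y"
  unfolding sesq_form_def fscale_def by (simp add: sum_distrib_left mult.assoc)

lemma sesq_form_scale_right: "sesq_form \<sigma> n x (fscale c y) = \<sigma> c * sesq_form \<sigma> n x y"
  unfolding sesq_form_def fscale_def by (simp add: sum_distrib_left mult mult.left_commute)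

lemma sesq_form_zero_left [simp]: "sesq_form \<sigma> n 0 y = 0"
  by (simp add: sesq_form_def)

lemma sesq_form_zero_right [simp]: "sesq_form \<sigma> n x 0 = 0"
  by (simp add: sesq_form_def zero)

lemma sesq_form_commute: "sesq_form \<sigma> n y x = \<sigma> (sesq_form \<sigma> n x y)"
  by (simp add: sesq_form_def sum mult involutive mult.commute)

lemma subspace_sesq_dual: "vs.subspace (sesq_dual \<sigma> n C)"
  using subspace_vecs[of n]
  by (auto simp: vs.subspace_def sesq_dual_def sesq_form_add_left sesq_form_scale_left)

lemma sesq_form_eq_0_commute: "sesq_form \<sigma> n x y = 0 \<longleftrightarrow> sesq_form \<sigma> n y x = 0"
  by (metis sesq_form_commute zero involutive)

lemma subset_sesq_dual_commute:
  assumes "A \<subseteq> vecs n" "B \<subseteq> vecs n"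
  shows "A \<subseteq> sesq_dual \<sigma> n B \<longleftrightarrow> B \<subseteq> sesq_dual \<sigma> n A"
proof -
  have "A \<subseteq> sesq_dual \<sigma> n B \<longleftrightarrow> (\<forall>a\<in>A. \<forall>b\<in>B. sesq_form \<sigma> n a b = 0)"
    using assms(1) by (auto simp: sesq_dual_def)
  also have "\<dots> \<longleftrightarrow> (\<forall>b\<in>B. \<forall>a\<in>A. sesq_form \<sigma> n b a = 0)"
    using sesq_form_eq_0_commute by blast
  also have "\<dots> \<longleftrightarrow> B \<subseteq> sesq_dual \<sigma> n A"
    using assms(2) by (auto simp: sesq_dual_def)
  finally show ?thesis .
qed

lemma sesq_dual_span: "sesq_dual \<sigma> n (vs.span B) = sesq_dual \<sigma> n B"
proof (intro equalityI subsetI)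
  fix x assume x: "x \<in> sesq_dual \<sigma> n B"
  have "vs.subspace {y. sesq_form \<sigma> n x y = 0}"
    by (auto simp: vs.subspace_def sesq_form_add_right sesq_form_scale_right)
  then have "vs.span B \<subseteq> {y. sesq_form \<sigma> n x y = 0}"
    using x by (intro vs.span_minimal) (auto simp: sesq_dual_def)
  then show "x \<in> sesq_dual \<sigma> n (vs.span B)"
    using x by (auto simp: sesq_dual_def)
qed (auto simp: sesq_dual_def vs.span_base)

lemma sesq_dual_sums:
  assumes "0 \<in> A" "0 \<in> B"
  shows "sesq_dual \<sigma> n {x + y |x y. x \<in> A \<and> y \<in> B} = sesq_dual \<sigma> n A \<inter> sesq_dual \<sigma> n B"
  using assms unfolding sesq_dual_def
  by (auto simp: sesq_form_add_right) (metis add.right_neutral, metis add.left_neutral)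

lemma sesq_form_representation:
  assumes "Vector_Spaces.linear fscale (*) \<phi>"
  shows "\<exists>y\<in>vecs n. \<forall>z\<in>vecs n. sesq_form \<sigma> n z y = \<phi> z"
proof -
  interpret \<phi>: Vector_Spaces.linear fscale "(*) :: 'a \<Rightarrow> 'a \<Rightarrow> 'a" \<phi> by fact
  define e :: "nat \<Rightarrow> nat \<Rightarrow> 'a" where "e i = (\<lambda>j. if j = i then 1 else 0)" for i
  define y where "y i = (if i < n then \<sigma> (\<phi> (e i)) else 0)" for i
  have "\<phi> z = sesq_form \<sigma> n z y" if z: "z \<in> vecs n" for z
  proof -
    have "(\<Sum>i<n. fscale (z i) (e i)) j = (\<Sum>i<n. if i = j then z i else 0)" for j
    proof -
      have "additive (\<lambda>v :: nat \<Rightarrow> 'a. v j)" by unfold_locales simp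
      then have "(\<Sum>i<n. fscale (z i) (e i)) j = (\<Sum>i<n. fscale (z i) (e i) j)"
        by (rule additive.sum)
      also have "\<dots> = (\<Sum>i<n. if i = j then z i else 0)"
        by (intro sum.cong) (auto simp: fscale_def e_def)
      finally show ?thesis .
    qed
    then have "z = (\<Sum>i<n. fscale (z i) (e i))"
      using z by (auto simp: fun_eq_iff vecs_def not_less)
    then have "\<phi> z = (\<Sum>i<n. z i * \<phi> (e i))"
      by (metis (no_types, lifting) \<phi>.scale \<phi>.sum sum.cong)
    then show ?thesis by (simp add: sesq_form_def y_def involutive)
  qed
  moreover have "y \<in> vecs n" by (simp add: vecs_def y_def)
  ultimately show ?thesis by metis
qed

lemma exists_sesq_form_values:
  assumes "vs.independent B" "B \<subseteq> vecs n"
  shows "\<exists>x\<in>vecs n. \<forall>b\<in>B. sesq_form \<sigma> n x b = g b"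
proof -
  interpret vs_pair: vector_space_pair "fscale :: 'a \<Rightarrow> (nat \<Rightarrow> 'a) \<Rightarrow> nat \<Rightarrow> 'a" "(*)"
    by unfold_locales (auto simp: algebra_simps)
  let ?\<phi> = "vs_pair.construct B (\<lambda>b. \<sigma> (g b))"
  obtain y where y: "y \<in> vecs n" "\<And>z. z \<in> vecs n \<Longrightarrow> sesq_form \<sigma> n z y = ?\<phi> z"
    using sesq_form_representation vs_pair.linear_construct[OF assms(1)] by blast
  have "sesq_form \<sigma> n y b = g b" if "b \<in> B" for b
    using sesq_form_commute[of n y b] y(2) assms(2) that
    by (auto simp: vs_pair.construct_basis[OF assms(1)] involutive)
  with y(1) show ?thesis by blast
qed

end

locale finite_field_involution = field_involution \<sigma> for \<sigma> :: "'a::{finite,field} \<Rightarrow> 'a"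
begin

lemma card_sesq_dual_mult_card:
  assumes C: "vs.subspace C" "C \<subseteq> vecs n"
  shows "card (sesq_dual \<sigma> n C) * card C = card (UNIV :: 'a set) ^ n"
proof -
  obtain B where B: "B \<subseteq> C" "vs.independent B" "C \<subseteq> vs.span B" "card B = vs.dim C"
    by (rule vs.basis_exists)
  have "finite B"
    by (rule finite_subset[OF _ finite_vecs]) (use B(1) C(2) in blast)
  have span: "vs.span B = C" using vs.span_subspace[OF B(1,3) C(1)] .
  define f where "f x = (\<lambda>b. if b \<in> B then sesq_form \<sigma> n x b else 0)" for x
  have "additive f"
    by unfold_locales (simp add: f_def fun_eq_iff sesq_form_add_left)
  have "f x = 0 \<longleftrightarrow> (\<forall>b\<in>B. sesq_form \<sigma> n x b = 0)" for x
    by (auto simp: f_def fun_eq_iff)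
  then have kernel: "{x \<in> vecs n. f x = 0} = sesq_dual \<sigma> n C"
    unfolding span[symmetric] sesq_dual_span by (auto simp: sesq_dual_def)
  have image: "f ` vecs n = {g. \<forall>b. b \<notin> B \<longrightarrow> g b = 0}"
  proof (intro equalityI subsetI)
    fix g :: "(nat \<Rightarrow> 'a) \<Rightarrow> 'a" assume g: "g \<in> {g. \<forall>b. b \<notin> B \<longrightarrow> g b = 0}"
    obtain x where "x \<in> vecs n" "\<forall>b\<in>B. sesq_form \<sigma> n x b = g b"
      using exists_sesq_form_values[OF B(2)] B(1) C(2) by blast
    then show "g \<in> f ` vecs n"
      using g by (intro image_eqI[of _ _ x]) (auto simp: f_def fun_eq_iff)
  qed (auto simp: f_def)
  have "card (vecs n :: (nat \<Rightarrow> 'a) set) = card {x \<in> vecs n. f x = 0} * card (f ` vecs n)"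
    by (rule card_eq_card_kernel_mult_card_image[OF \<open>additive f\<close> finite_vecs])
       (simp add: vs.subspace_diff subspace_vecs)
  also have "\<dots> = card (sesq_dual \<sigma> n C) * card C"
    unfolding kernel image card_funs_vanishing_outside[OF \<open>finite B\<close>]
      vs.card_span_independent[OF B(2) \<open>finite B\<close>, unfolded span, symmetric] ..
  finally show ?thesis by (simp add: card_vecs)
qed

lemma eq_sesq_dual_iff:
  assumes C: "vs.subspace C" "C \<subseteq> vecs n"
  shows "D = sesq_dual \<sigma> n C \<longleftrightarrow>
    D \<subseteq> sesq_dual \<sigma> n C \<and> card D * card C = card (UNIV :: 'a set) ^ n"
proof (intro iffI conjI)
  assume D: "D \<subseteq> sesq_dual \<sigma> n C \<and> card D * card C = card (UNIV :: 'a set) ^ n"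
  have "card C > 0"
    using vs.subspace_0[OF C(1)] finite_subset[OF C(2) finite_vecs] by (auto simp: card_gt_0_iff)
  moreover have "card D * card C = card (sesq_dual \<sigma> n C) * card C"
    using D card_sesq_dual_mult_card[OF C] by simp
  ultimately have "card D = card (sesq_dual \<sigma> n C)" by simp
  then show "D = sesq_dual \<sigma> n C"
    using D card_subset_eq[OF finite_sesq_dual] by blast
qed (use card_sesq_dual_mult_card[OF C] in auto)

lemma sesq_dual_sesq_dual:
  assumes C: "vs.subspace C" "C \<subseteq> vecs n"
  shows "sesq_dual \<sigma> n (sesq_dual \<sigma> n C) = C"
proof -
  have "C \<subseteq> sesq_dual \<sigma> n (sesq_dual \<sigma> n C)"
    using subset_sesq_dual_commute[OF C(2) sesq_dual_subset_vecs] by blast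
  moreover have "card C * card (sesq_dual \<sigma> n C) = card (UNIV :: 'a set) ^ n"
    using card_sesq_dual_mult_card[OF C] by (simp add: mult.commute)
  ultimately show ?thesis
    using eq_sesq_dual_iff[OF subspace_sesq_dual sesq_dual_subset_vecs] by metis
qed

lemma card_Int_sesq_dual_commute:
  assumes C1: "vs.subspace C1" "C1 \<subseteq> vecs n" and C2: "vs.subspace C2" "C2 \<subseteq> vecs n"
  shows "card (C1 \<inter> sesq_dual \<sigma> n C2) * card C2 = card (C2 \<inter> sesq_dual \<sigma> n C1) * card C1"
proof -
  let ?D = "sesq_dual \<sigma> n C2"
  let ?S = "{x + y |x y. x \<in> C1 \<and> y \<in> ?D}"
  have D: "vs.subspace ?D" "?D \<subseteq> vecs n"
    by (rule subspace_sesq_dual, rule sesq_dual_subset_vecs)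
  have S: "vs.subspace ?S" "?S \<subseteq> vecs n"
    using vs.subspace_sums[OF C1(1) D(1)] C1(2) D(2) vs.subspace_add[OF subspace_vecs] by blast+
  have sums: "card ?S * card (C1 \<inter> ?D) = card C1 * card ?D"
    using finite_subset[OF C1(2) finite_vecs] finite_subset[OF D(2) finite_vecs]
    by (rule card_sums_mult_card_Int) (use C1(1) D(1) vs.subspace_diff in blast)+
  have "sesq_dual \<sigma> n ?S = C2 \<inter> sesq_dual \<sigma> n C1"
    using sesq_dual_sums[OF vs.subspace_0[OF C1(1)] vs.subspace_0[OF D(1)]]
      sesq_dual_sesq_dual[OF C2] by blast
  then have dual_sums: "card (C2 \<inter> sesq_dual \<sigma> n C1) * card ?S = card ?D * card C2"
    using card_sesq_dual_mult_card[OF S] card_sesq_dual_mult_card[OF C2] by simp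
  have "card ?S * (card (C1 \<inter> ?D) * card C2) = card C1 * (card ?D * card C2)"
    using sums by (simp add: mult.assoc[symmetric])
  also have "\<dots> = card ?S * (card (C2 \<inter> sesq_dual \<sigma> n C1) * card C1)"
    using dual_sums by (simp add: ac_simps)
  finally show ?thesis
    using vs.subspace_0[OF S(1)] finite_subset[OF S(2) finite_vecs] by (auto simp: card_gt_0_iff)
qed

lemma dim_Int_sesq_dual_commute:
  assumes C1: "vs.subspace C1" "C1 \<subseteq> vecs n" and C2: "vs.subspace C2" "C2 \<subseteq> vecs n"
  shows "vs.dim (C1 \<inter> sesq_dual \<sigma> n C2) + vs.dim C2 = vs.dim (C2 \<inter> sesq_dual \<sigma> n C1) + vs.dim C1"
proof -
  let ?q = "card (UNIV :: 'a set)"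
  have "card (C1 \<inter> sesq_dual \<sigma> n C2) = ?q ^ vs.dim (C1 \<inter> sesq_dual \<sigma> n C2)"
    by (rule card_subspace_vecs) (use C1 vs.subspace_inter subspace_sesq_dual in blast)+
  moreover have "card (C2 \<inter> sesq_dual \<sigma> n C1) = ?q ^ vs.dim (C2 \<inter> sesq_dual \<sigma> n C1)"
    by (rule card_subspace_vecs) (use C2 vs.subspace_inter subspace_sesq_dual in blast)+
  ultimately have "?q ^ (vs.dim (C1 \<inter> sesq_dual \<sigma> n C2) + vs.dim C2) =
      ?q ^ (vs.dim (C2 \<inter> sesq_dual \<sigma> n C1) + vs.dim C1)"
    using card_Int_sesq_dual_commute[OF C1 C2] card_subspace_vecs[OF C1] card_subspace_vecs[OF C2]
    by (simp add: power_add)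
  then show ?thesis using power_inject_exp[OF one_less_card_UNIV] by blast
qed

lemma eq_sesq_dual_commute:
  assumes "vs.subspace C1" "C1 \<subseteq> vecs n" "vs.subspace C2" "C2 \<subseteq> vecs n"
  shows "C1 = sesq_dual \<sigma> n C2 \<longleftrightarrow> C2 = sesq_dual \<sigma> n C1"
  using eq_sesq_dual_iff[OF assms(3,4), of C1] eq_sesq_dual_iff[OF assms(1,2), of C2]
    subset_sesq_dual_commute[OF assms(2,4)] by (auto simp: mult.commute)

end

section \<open>The \<open>(u | u + v)\<close> construction\<close>

definition vec_concat :: "nat \<Rightarrow> (nat \<Rightarrow> 'a::zero) \<Rightarrow> (nat \<Rightarrow> 'a) \<Rightarrow> nat \<Rightarrow> 'a" where
  "vec_concat n a b = (\<lambda>i. if i < n then a i else if i < 2 * n then b (i - n) else 0)"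

lemma uuv_eq: "uuv n C1 C2 = {vec_concat n u (u + v) |u v. u \<in> C1 \<and> v \<in> C2}"
  by (simp add: uuv_def vec_concat_def plus_fun_def)

lemma vec_concat_in_vecs: "vec_concat n a b \<in> vecs (2 * n)"
  by (simp add: vec_concat_def vecs_def)

lemma vec_concat_zero: "vec_concat n 0 0 = 0"
  by (simp add: vec_concat_def fun_eq_iff)

lemma vec_concat_add:
  fixes a b a' b' :: "nat \<Rightarrow> 'a::monoid_add"
  shows "vec_concat n a b + vec_concat n a' b' = vec_concat n (a + a') (b + b')"
  by (simp add: vec_concat_def fun_eq_iff)

lemma fscale_vec_concat: "fscale c (vec_concat n a b) = vec_concat n (fscale c a) (fscale c b)"
  by (simp add: vec_concat_def fscale_def fun_eq_iff)

lemma vec_concat_eq_iff: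
  assumes "a \<in> vecs n" "a' \<in> vecs n" "b \<in> vecs n" "b' \<in> vecs n"
  shows "vec_concat n a b = vec_concat n a' b' \<longleftrightarrow> a = a' \<and> b = b'"
proof
  assume eq: "vec_concat n a b = vec_concat n a' b'"
  have "a i = a' i \<and> b i = b' i" for i
  proof (cases "i < n")
    case True
    then show ?thesis using fun_cong[OF eq, of i] fun_cong[OF eq, of "i + n"] by (simp add: vec_concat_def)
  next
    case False
    then show ?thesis using assms by (simp add: vecs_def)
  qed
  then show "a = a' \<and> b = b'" by (simp add: fun_eq_iff)
qed simp

lemma sesq_form_vec_concat:
  "sesq_form \<sigma> (2 * n) (vec_concat n a b) (vec_concat n a' b') =
    sesq_form \<sigma> n a a' + sesq_form \<sigma> n b b'"
  by (simp add: sesq_form_def sum_lessThan_double vec_concat_def)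

lemma linear_code_uuv:
  fixes C1 C2 :: "(nat \<Rightarrow> 'a::{finite,field}) set"
  assumes "linear_code n C1" "linear_code n C2"
  shows "linear_code (2 * n) (uuv n C1 C2)"
proof -
  have C1: "vs.subspace C1" and C2: "vs.subspace C2"
    using assms by (simp_all add: linear_code_def)
  have "vs.subspace (uuv n C1 C2)"
    unfolding vs.subspace_def uuv_eq
  proof (intro conjI ballI allI, goal_cases)
    case 1
    show ?case
      using vs.subspace_0[OF C1] vs.subspace_0[OF C2]
      by (intro CollectI exI[where x = 0]) (simp add: vec_concat_zero)
  next
    case (2 w w')
    then obtain u v u' v' where "w = vec_concat n u (u + v)" "w' = vec_concat n u' (u' + v')"
      "u \<in> C1" "v \<in> C2" "u' \<in> C1" "v' \<in> C2" by blast
    moreover have "vec_concat n u (u + v) + vec_concat n u' (u' + v') =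
        vec_concat n (u + u') ((u + u') + (v + v'))"
      by (simp add: vec_concat_add algebra_simps)
    ultimately show ?case using vs.subspace_add[OF C1] vs.subspace_add[OF C2] by fastforce
  next
    case (3 c w)
    then obtain u v where "w = vec_concat n u (u + v)" "u \<in> C1" "v \<in> C2" by blast
    moreover have "fscale c (vec_concat n u (u + v)) =
        vec_concat n (fscale c u) (fscale c u + fscale c v)"
      by (simp add: fscale_vec_concat vs.scale_right_distrib)
    ultimately show ?case using vs.subspace_scale[OF C1] vs.subspace_scale[OF C2] by fastforce
  qed
  then show ?thesis by (auto simp: linear_code_def uuv_eq vec_concat_in_vecs)
qed

lemma card_uuv:
  assumes "A \<subseteq> vecs n" "B \<subseteq> vecs n"
  shows "card (uuv n A B) = card A * card B"
proof -
  have "uuv n A B = (\<lambda>(u, v). vec_concat n u (u + v)) ` (A \<times> B)"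
    by (auto simp: uuv_eq)
  moreover have "inj_on (\<lambda>(u, v). vec_concat n u (u + v)) (A \<times> B)"
  proof (rule inj_onI, clarify)
    fix u v u' v' assume uv: "u \<in> A" "v \<in> B" "u' \<in> A" "v' \<in> B"
      and eq: "vec_concat n u (u + v) = vec_concat n u' (u' + v')"
    have "u + v \<in> vecs n" "u' + v' \<in> vecs n"
      using uv assms vs.subspace_add[OF subspace_vecs] by blast+
    then show "u = u' \<and> v = v'"
      using eq uv assms vec_concat_eq_iff by (metis add_left_cancel subsetD)
  qed
  ultimately show ?thesis by (simp add: card_image card_cartesian_product)
qed

context finite_field_involution
begin

context
  fixes n :: nat and C1 C2 :: "(nat \<Rightarrow> 'a) set"
  assumes C1: "vs.subspace C1" "C1 \<subseteq> vecs n"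
    and C2: "vs.subspace C2" "C2 \<subseteq> vecs n"
    and C2_self_orthogonal: "C2 \<subseteq> sesq_dual \<sigma> n C2"
    and char_2_or_C1_self_orthogonal: "CHAR('a) = 2 \<or> C1 \<subseteq> sesq_dual \<sigma> n C1"
begin

lemma sesq_form_uuv:
  assumes "u \<in> C1" "u' \<in> C1" "v \<in> C2" "v' \<in> C2"
  shows "sesq_form \<sigma> (2 * n) (vec_concat n u (u + v)) (vec_concat n u' (u' + v')) =
    sesq_form \<sigma> n u v' + sesq_form \<sigma> n v u'"
proof -
  have vv: "sesq_form \<sigma> n v v' = 0"
    using C2_self_orthogonal assms(3,4) by (auto simp: sesq_dual_def)
  have uu: "sesq_form \<sigma> n u u' + sesq_form \<sigma> n u u' = 0"
    using char_2_or_C1_self_orthogonal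
  proof
    assume "CHAR('a) = 2"
    then have "(2 :: 'a) = 0" using of_nat_CHAR[where 'a = 'a] by simp
    then show ?thesis by (metis mult_2 mult_zero_left)
  next
    assume "C1 \<subseteq> sesq_dual \<sigma> n C1"
    then show ?thesis using assms(1,2) by (auto simp: sesq_dual_def)
  qed
  have "sesq_form \<sigma> (2 * n) (vec_concat n u (u + v)) (vec_concat n u' (u' + v')) =
      sesq_form \<sigma> n u u' + sesq_form \<sigma> n (u + v) (u' + v')"
    by (rule sesq_form_vec_concat)
  also have "\<dots> = (sesq_form \<sigma> n u u' + sesq_form \<sigma> n u u') +
      (sesq_form \<sigma> n u v' + sesq_form \<sigma> n v u') + sesq_form \<sigma> n v v'"
    by (simp only: sesq_form_add_left sesq_form_add_right ac_simps)
  also have "\<dots> = sesq_form \<sigma> n u v' + sesq_form \<sigma> n v u'"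
    by (simp only: uu vv add_0_left add_0_right)
  finally show ?thesis .
qed

lemma vec_concat_in_sesq_dual_uuv_iff:
  assumes "u \<in> C1" "v \<in> C2"
  shows "vec_concat n u (u + v) \<in> sesq_dual \<sigma> (2 * n) (uuv n C1 C2) \<longleftrightarrow>
    u \<in> sesq_dual \<sigma> n C2 \<and> v \<in> sesq_dual \<sigma> n C1"
proof -
  have "vec_concat n u (u + v) \<in> sesq_dual \<sigma> (2 * n) (uuv n C1 C2) \<longleftrightarrow>
      (\<forall>u'\<in>C1. \<forall>v'\<in>C2.
        sesq_form \<sigma> (2 * n) (vec_concat n u (u + v)) (vec_concat n u' (u' + v')) = 0)"
    unfolding sesq_dual_def uuv_eq using vec_concat_in_vecs by blast
  also have "\<dots> \<longleftrightarrow> (\<forall>u'\<in>C1. \<forall>v'\<in>C2. sesq_form \<sigma> n u v' + sesq_form \<sigma> n v u' = 0)"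
    using assms by (simp add: sesq_form_uuv)
  also have "\<dots> \<longleftrightarrow> (\<forall>v'\<in>C2. sesq_form \<sigma> n u v' = 0) \<and> (\<forall>u'\<in>C1. sesq_form \<sigma> n v u' = 0)"
    using vs.subspace_0[OF C1(1)] vs.subspace_0[OF C2(1)] by fastforce
  also have "\<dots> \<longleftrightarrow> u \<in> sesq_dual \<sigma> n C2 \<and> v \<in> sesq_dual \<sigma> n C1"
    using assms C1(2) C2(2) by (auto simp: sesq_dual_def)
  finally show ?thesis .
qed

lemma uuv_subset_sesq_dual_iff:
  "uuv n C1 C2 \<subseteq> sesq_dual \<sigma> (2 * n) (uuv n C1 C2) \<longleftrightarrow> C1 \<subseteq> sesq_dual \<sigma> n C2"
proof -
  have "uuv n C1 C2 \<subseteq> sesq_dual \<sigma> (2 * n) (uuv n C1 C2) \<longleftrightarrow>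
      (\<forall>u\<in>C1. \<forall>v\<in>C2. vec_concat n u (u + v) \<in> sesq_dual \<sigma> (2 * n) (uuv n C1 C2))"
    unfolding uuv_eq by blast
  also have "\<dots> \<longleftrightarrow> (\<forall>u\<in>C1. \<forall>v\<in>C2. u \<in> sesq_dual \<sigma> n C2 \<and> v \<in> sesq_dual \<sigma> n C1)"
    by (simp add: vec_concat_in_sesq_dual_uuv_iff)
  also have "\<dots> \<longleftrightarrow> C1 \<subseteq> sesq_dual \<sigma> n C2 \<and> C2 \<subseteq> sesq_dual \<sigma> n C1"
    using vs.subspace_0[OF C1(1)] vs.subspace_0[OF C2(1)] by blast
  finally show ?thesis
    using subset_sesq_dual_commute[OF C1(2) C2(2)] by blast
qed

lemma uuv_Int_sesq_dual:
  "uuv n C1 C2 \<inter> sesq_dual \<sigma> (2 * n) (uuv n C1 C2) =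
    uuv n (C1 \<inter> sesq_dual \<sigma> n C2) (C2 \<inter> sesq_dual \<sigma> n C1)"
proof (intro equalityI subsetI)
  fix w assume w: "w \<in> uuv n C1 C2 \<inter> sesq_dual \<sigma> (2 * n) (uuv n C1 C2)"
  then obtain u v where "w = vec_concat n u (u + v)" "u \<in> C1" "v \<in> C2"
    by (auto simp: uuv_eq)
  with w show "w \<in> uuv n (C1 \<inter> sesq_dual \<sigma> n C2) (C2 \<inter> sesq_dual \<sigma> n C1)"
    using vec_concat_in_sesq_dual_uuv_iff by (auto simp: uuv_eq)
next
  fix w assume "w \<in> uuv n (C1 \<inter> sesq_dual \<sigma> n C2) (C2 \<inter> sesq_dual \<sigma> n C1)"
  then obtain u v where "w = vec_concat n u (u + v)" "u \<in> C1 \<inter> sesq_dual \<sigma> n C2"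
      "v \<in> C2 \<inter> sesq_dual \<sigma> n C1"
    by (auto simp: uuv_eq)
  then show "w \<in> uuv n C1 C2 \<inter> sesq_dual \<sigma> (2 * n) (uuv n C1 C2)"
    using vec_concat_in_sesq_dual_uuv_iff by (auto simp: uuv_eq)
qed

lemma uuv_Int_sesq_dual_eq_0_iff:
  "uuv n C1 C2 \<inter> sesq_dual \<sigma> (2 * n) (uuv n C1 C2) = {0} \<longleftrightarrow>
    2 * int (vs.dim (C1 \<inter> sesq_dual \<sigma> n C2)) = int (vs.dim C1) - int (vs.dim C2)"
proof -
  let ?A = "C1 \<inter> sesq_dual \<sigma> n C2" and ?B = "C2 \<inter> sesq_dual \<sigma> n C1"
  let ?q = "card (UNIV :: 'a set)"
  have A: "vs.subspace ?A" "?A \<subseteq> vecs n" and B: "vs.subspace ?B" "?B \<subseteq> vecs n"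
    using C1 C2 subspace_sesq_dual vs.subspace_inter by blast+
  have "0 \<in> uuv n ?A ?B"
    unfolding uuv_eq using vs.subspace_0[OF A(1)] vs.subspace_0[OF B(1)]
    by (intro CollectI exI[where x = 0]) (simp add: vec_concat_zero)
  moreover have "finite (uuv n ?A ?B)"
    using linear_code_uuv[of n ?A ?B] A B finite_subset[OF _ finite_vecs]
    by (auto simp: linear_code_def)
  ultimately have "uuv n ?A ?B = {0} \<longleftrightarrow> card (uuv n ?A ?B) = 1"
    by (metis card_1_singleton_iff card_eq_0_iff empty_iff One_nat_def singletonD)
  also have "card (uuv n ?A ?B) = ?q ^ (vs.dim ?A + vs.dim ?B)"
    by (simp add: card_uuv A(2) B(2) card_subspace_vecs[OF A] card_subspace_vecs[OF B] power_add)
  also have "?q ^ (vs.dim ?A + vs.dim ?B) = 1 \<longleftrightarrow> vs.dim ?A + vs.dim ?B = 0"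
    using power_inject_exp[OF one_less_card_UNIV, of "vs.dim ?A + vs.dim ?B" 0] by (simp only: power_0)
  finally have "uuv n ?A ?B = {0} \<longleftrightarrow> vs.dim ?A + vs.dim ?B = 0" .
  moreover have "vs.dim ?A + vs.dim C2 = vs.dim ?B + vs.dim C1"
    using dim_Int_sesq_dual_commute[OF C1 C2] .
  ultimately show ?thesis
    unfolding uuv_Int_sesq_dual by linarith
qed

lemma uuv_eq_sesq_dual_iff:
  "uuv n C1 C2 = sesq_dual \<sigma> (2 * n) (uuv n C1 C2) \<longleftrightarrow> C1 = sesq_dual \<sigma> n C2"
proof -
  let ?X = "uuv n C1 C2" and ?q = "card (UNIV :: 'a set)"
  have X: "vs.subspace ?X" "?X \<subseteq> vecs (2 * n)"
    using linear_code_uuv[of n C1 C2] C1 C2 by (simp_all add: linear_code_def)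
  have "?X = sesq_dual \<sigma> (2 * n) ?X \<longleftrightarrow>
      C1 \<subseteq> sesq_dual \<sigma> n C2 \<and> (card C1 * card C2) * (card C1 * card C2) = ?q ^ n * ?q ^ n"
    using eq_sesq_dual_iff[OF X, of ?X] uuv_subset_sesq_dual_iff card_uuv[OF C1(2) C2(2)]
    by (simp add: mult_2 power_add)
  also have "\<dots> \<longleftrightarrow> C1 \<subseteq> sesq_dual \<sigma> n C2 \<and> card C1 * card C2 = ?q ^ n"
    by (metis power2_eq_iff_nonneg power2_eq_square zero_le)
  also have "\<dots> \<longleftrightarrow> C1 = sesq_dual \<sigma> n C2"
    using eq_sesq_dual_iff[OF C2, of C1] by blast
  finally show ?thesis .
qed

end

end

section \<open>Euclidean and Hermitian inner products\<close>

lemma sqrt_q_eq: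
  assumes "card (UNIV :: 'a::finite set) = r ^ 2"
  shows "sqrt_q TYPE('a) = r"
  unfolding sqrt_q_def
proof (rule the_equality)
  fix s :: nat assume "s ^ 2 = card (UNIV :: 'a set)"
  then show "s = r" using assms by (simp add: power2_eq_iff_nonneg)
qed (use assms in simp)

definition inner_conj :: "inner_kind \<Rightarrow> 'a::{finite,field} \<Rightarrow> 'a" where
  "inner_conj k = (case k of Euclidean \<Rightarrow> id | Hermitian \<Rightarrow> (\<lambda>a. a ^ sqrt_q TYPE('a)))"

lemma ip_eq_sesq_form: "ip k n = sesq_form (inner_conj k) n"
  by (cases k) (simp_all add: ip_def sesq_form_def inner_conj_def fun_eq_iff)

lemma dual_eq_sesq_dual: "dual k n = sesq_dual (inner_conj k) n"
  by (simp add: dual_def sesq_dual_def ip_eq_sesq_form fun_eq_iff)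

lemma finite_field_involution_inner_conj:
  assumes "admissible_kind k TYPE('a::{finite,field})"
  shows "finite_field_involution (inner_conj k :: 'a \<Rightarrow> 'a)"
proof (cases k)
  case Euclidean
  then show ?thesis by unfold_locales (simp_all add: inner_conj_def)
next
  case Hermitian
  then obtain p h where ph: "prime p" "even h" "card (UNIV :: 'a set) = p ^ h"
    using assms by (auto simp: admissible_kind_def)
  define r where "r = p ^ (h div 2)"
  have card: "card (UNIV :: 'a set) = r ^ 2"
    using ph(2,3) by (simp add: r_def power_mult[symmetric])
  have conj: "inner_conj k = (\<lambda>a :: 'a. a ^ r)"
    using Hermitian sqrt_q_eq[OF card] by (simp add: inner_conj_def)
  have CHAR: "CHAR('a) = p"
    by (rule CHAR_eq_if_card_UNIV_eq_prime_power[OF ph(1,3)])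
  show ?thesis
    unfolding conj
  proof unfold_locales
    fix a b :: 'a
    show "(a + b) ^ r = a ^ r + b ^ r"
      by (rule freshmans_dream') (simp_all add: CHAR ph(1) r_def)
    show "(a * b) ^ r = a ^ r * b ^ r"
      by (rule power_mult_distrib)
    show "(a ^ r) ^ r = a"
      using power_card_UNIV_eq_self[of a] by (simp add: card power2_eq_square power_mult)
  qed
qed

theorem corollary3:
  fixes C1 C2 :: "(nat \<Rightarrow> 'a::{finite,field}) set"
    and n :: nat and k :: inner_kind
  assumes "linear_code n C1" and "linear_code n C2"
    and "admissible_kind k TYPE('a)"
    and "(\<exists>m. card (UNIV :: 'a set) = 2 ^ m) \<and> self_orthogonal k n C2
         \<or> self_orthogonal k n C1 \<and> self_orthogonal k n C2"
  shows "(self_orthogonal k (2 * n) (uuv n C1 C2) \<longleftrightarrow> C1 \<subseteq> dual k n C2)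
       \<and> (C1 \<subseteq> dual k n C2 \<longleftrightarrow> C2 \<subseteq> dual k n C1)
       \<and> (LCD k (2 * n) (uuv n C1 C2) \<longleftrightarrow>
            2 * int (code_dim (C1 \<inter> dual k n C2)) = int (code_dim C1) - int (code_dim C2))
       \<and> (self_dual k (2 * n) (uuv n C1 C2) \<longleftrightarrow> C1 = dual k n C2)
       \<and> (C1 = dual k n C2 \<longleftrightarrow> C2 = dual k n C1)"
proof -
  interpret finite_field_involution "inner_conj k :: 'a \<Rightarrow> 'a"
    using assms(3) by (rule finite_field_involution_inner_conj)
  have C1: "vs.subspace C1" "C1 \<subseteq> vecs n" and C2: "vs.subspace C2" "C2 \<subseteq> vecs n"
    using assms(1,2) by (simp_all add: linear_code_def)
  have "C2 \<subseteq> sesq_dual (inner_conj k) n C2"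
    and "CHAR('a) = 2 \<or> C1 \<subseteq> sesq_dual (inner_conj k) n C1"
    using assms(4) CHAR_eq_if_card_UNIV_eq_prime_power[OF two_is_prime_nat]
    by (auto simp: self_orthogonal_def dual_eq_sesq_dual)
  note uuv_facts = uuv_subset_sesq_dual_iff[OF C1 C2 this]
    uuv_Int_sesq_dual_eq_0_iff[OF C1 C2 this] uuv_eq_sesq_dual_iff[OF C1 C2 this]
  show ?thesis
    unfolding self_orthogonal_def LCD_def self_dual_def code_dim_def dual_eq_sesq_dual
    using uuv_facts subset_sesq_dual_commute[OF C1(2) C2(2)] eq_sesq_dual_commute[OF C1 C2]
    by blast
qed

end
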